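(* Let $k\ge 2$. If $G$ is a finite simple graph admitting a closed neighborhood balanced $k$-coloring, then the Cartesian product $G\,\square\, K_2$ admits a neighborhood-balanced $k$-coloring.
   Context: For a vertex $v$, $N(v)=\{u: uv\in E\}$ and $N[v]=N(v)\cup\{v\}$. A neighborhood-balanced $k$-coloring of a graph is a map $c:V\to\{1,\dots,k\}$ such that for every vertex $v$ the numbers $|\{u\in N(v): c(u)=i\}|$, $i=1,\dots,k$, are all equal; a closed neighborhood balanced $k$-coloring is defined likewise with $N[v]$ in place of $N(v)$. The Cartesian product $G\,\square\,H$ has vertex set $V(G)\times V(H)$, with $(g,h)$ adjacent to $(g',h')$ iff ($g=g'$ and $hh'\in E(H)$) or ($h=h'$ and $gg'\in E(G)$). *)

theory Defs
  imports Main
begin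

definition simple_graph :: "'a set \<Rightarrow> ('a \<Rightarrow> 'a \<Rightarrow> bool) \<Rightarrow> bool" where
  "simple_graph V E \<longleftrightarrow> finite V \<and>
     (\<forall>u v. E u v \<longrightarrow> u \<in> V \<and> v \<in> V) \<and>
     (\<forall>u v. E u v \<longrightarrow> E v u) \<and>
     (\<forall>v. \<not> E v v)"

definition open_nbhd :: "'a set \<Rightarrow> ('a \<Rightarrow> 'a \<Rightarrow> bool) \<Rightarrow> 'a \<Rightarrow> 'a set" where
  "open_nbhd V E v = {u \<in> V. E u v}"

definition closed_nbhd :: "'a set \<Rightarrow> ('a \<Rightarrow> 'a \<Rightarrow> bool) \<Rightarrow> 'a \<Rightarrow> 'a set" where
  "closed_nbhd V E v = insert v (open_nbhd V E v)"

definition balanced_wrt :: "'a set \<Rightarrow> ('a \<Rightarrow> 'a set) \<Rightarrow> nat \<Rightarrow> ('a \<Rightarrow> nat) \<Rightarrow> bool" where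
  "balanced_wrt V N k c \<longleftrightarrow> (\<forall>v\<in>V. c v \<in> {1..k}) \<and>
     (\<forall>v\<in>V. \<forall>i\<in>{1..k}. \<forall>j\<in>{1..k}.
        card {u \<in> N v. c u = i} = card {u \<in> N v. c u = j})"

definition nb_balanced_coloring :: "'a set \<Rightarrow> ('a \<Rightarrow> 'a \<Rightarrow> bool) \<Rightarrow> nat \<Rightarrow> ('a \<Rightarrow> nat) \<Rightarrow> bool" where
  "nb_balanced_coloring V E k c \<longleftrightarrow> balanced_wrt V (open_nbhd V E) k c"

definition closed_nb_balanced_coloring :: "'a set \<Rightarrow> ('a \<Rightarrow> 'a \<Rightarrow> bool) \<Rightarrow> nat \<Rightarrow> ('a \<Rightarrow> nat) \<Rightarrow> bool" where
  "closed_nb_balanced_coloring V E k c \<longleftrightarrow> balanced_wrt V (closed_nbhd V E) k c"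

definition cart_edges :: "('a \<Rightarrow> 'a \<Rightarrow> bool) \<Rightarrow> ('b \<Rightarrow> 'b \<Rightarrow> bool) \<Rightarrow> ('a \<times> 'b) \<Rightarrow> ('a \<times> 'b) \<Rightarrow> bool" where
  "cart_edges EG EH = (\<lambda>(g, h) (g', h'). (g = g' \<and> EH h h') \<or> (h = h' \<and> EG g g'))"

definition K2_verts :: "bool set" where "K2_verts = UNIV"
definition K2_edges :: "bool \<Rightarrow> bool \<Rightarrow> bool" where "K2_edges a b \<longleftrightarrow> a \<noteq> b"

end

theory Submission
  imports Defs
begin

text \<open>Colour \<open>(v, b)\<close> by the colour of \<open>v\<close>. The projection to the first factor maps the open
  neighbourhood of \<open>(v, b)\<close> in \<open>G \<box> K\<^sub>2\<close> bijectively onto the closed neighbourhood of \<open>v\<close>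
  in \<open>G\<close>: the neighbours \<open>(w, b)\<close> cover \<open>N(v)\<close>, and the \<open>K\<^sub>2\<close>-edge to \<open>(v, \<not> b)\<close> supplies
  \<open>v\<close> itself. So balance of \<open>N[v]\<close> is pulled back to balance of \<open>N(v, b)\<close>.\<close>

lemma bij_betw_Collect_comp:
  assumes "bij_betw p A B"
  shows "bij_betw p {u \<in> A. P (p u)} {w \<in> B. P w}"
  by (rule bij_betw_subset[OF assms])
    (use bij_betw_imp_surj_on[OF assms] in blast)+

lemma balanced_wrt_pullback:
  assumes bal: "balanced_wrt V N k c"
    and maps: "p ` W \<subseteq> V"
    and nbhd_bij: "\<And>x. x \<in> W \<Longrightarrow> bij_betw p (M x) (N (p x))"
  shows "balanced_wrt W M k (c \<circ> p)"
  unfolding balanced_wrt_def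
proof (intro conjI ballI)
  fix x assume "x \<in> W"
  then show "(c \<circ> p) x \<in> {1..k}"
    using bal maps unfolding balanced_wrt_def by auto
next
  fix x i j assume x: "x \<in> W" and ij: "i \<in> {1..k}" "j \<in> {1..k}"
  have class_card: "card {u \<in> M x. (c \<circ> p) u = l} = card {w \<in> N (p x). c w = l}" for l
    using bij_betw_Collect_comp[OF nbhd_bij[OF x], of "\<lambda>w. c w = l"]
    by (simp add: bij_betw_same_card)
  have "p x \<in> V" using x maps by blast
  then show "card {u \<in> M x. (c \<circ> p) u = i} = card {u \<in> M x. (c \<circ> p) u = j}"
    using bal ij unfolding class_card balanced_wrt_def by blast
qed

lemma bij_betw_fst_open_nbhd_cart_K2:
  assumes "v \<in> V" and "\<not> E v v"
  shows "bij_betw fst (open_nbhd (V \<times> K2_verts) (cart_edges E K2_edges) (v, b))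
           (closed_nbhd V E v)"
  by (rule bij_betw_byWitness[where f' = "\<lambda>w. (w, if w = v then \<not> b else b)"])
    (use assms in \<open>auto simp: open_nbhd_def closed_nbhd_def cart_edges_def K2_verts_def
       K2_edges_def image_iff\<close>)

theorem theorem2p19:
  fixes V :: "'a set" and E :: "'a \<Rightarrow> 'a \<Rightarrow> bool" and k :: nat
  assumes "k \<ge> 2"
    and "simple_graph V E"
    and "\<exists>c. closed_nb_balanced_coloring V E k c"
  shows "\<exists>c. nb_balanced_coloring (V \<times> K2_verts) (cart_edges E K2_edges) k c"
proof -
  obtain c where c: "closed_nb_balanced_coloring V E k c" using assms(3) by blast
  have "nb_balanced_coloring (V \<times> K2_verts) (cart_edges E K2_edges) k (c \<circ> fst)"
    unfolding nb_balanced_coloring_def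
  proof (rule balanced_wrt_pullback)
    show "balanced_wrt V (closed_nbhd V E) k c"
      using c by (simp add: closed_nb_balanced_coloring_def)
    show "fst ` (V \<times> K2_verts) \<subseteq> V" by auto
    show "bij_betw fst (open_nbhd (V \<times> K2_verts) (cart_edges E K2_edges) x)
            (closed_nbhd V E (fst x))" if "x \<in> V \<times> K2_verts" for x
      using that assms(2) bij_betw_fst_open_nbhd_cart_K2[of "fst x" V E "snd x"]
      by (auto simp: simple_graph_def)
  qed
  then show ?thesis by blast
qed

end
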